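(* Let $P$ be a basic program. Every answer set by complement of $P$ is an answer set by reduct of $P$. Moreover, if $P$ is naf-monotone, then every answer set by reduct of $P$ is an answer set by complement of $P$.
   Context: Fix a countable set $\mathcal{A}$ of atoms. A c-atom is $A=(A_d,A_c)$, $A_d\subseteq\mathcal{A}$, $A_c\subseteq 2^{A_d}$; $(\{p\},\{\{p\}\})$ is the elementary c-atom $p$; $\bot=(\mathcal{A},\emptyset)$. $A$ is monotone if $X\subseteq Y\subseteq A_d$ and $X\in A_c$ imply $Y\in A_c$. A rule: $A\leftarrow A_1,\dots,A_k,\mathit{not}\,A_{k+1},\dots,\mathit{not}\,A_n$; $head(r)=A$, $pos(r)=\{A_1,\dots,A_k\}$, $neg(r)=\{A_{k+1},\dots,A_n\}$. Program = set of rules; positive if all $neg(r)=\emptyset$; basic if every head is elementary or $\bot$; naf-monotone if every c-atom in some $neg(r)$ is monotone. $S\models A$ iff $S\cap A_d\in A_c$; $S\models\mathit{not}\,A$ iff $S\cap A_d\notin A_c$; rule satisfied if head satisfied or some body element not satisfied; model = satisfies all rules. Conditional satisfaction: $S\models_M A$ iff $S\models A$ and every $I$ with $S\cap A_d\subseteq I\subseteq M\cap A_d$ lies in $A_c$. For positive basic $P$: $T_P(S,M)=\{a\mid \exists r\in P,\ head(r)=(\{a\},\{\{a\}\}),\ S\models_M B\ \forall B\in pos(r)\}$, $T^0_P(\emptyset,M)=\emptyset$, $T^{i+1}_P(\emptyset,M)=T_P(T^i_P(\emptyset,M),M)$, $T^\infty_P(\emptyset,M)=\bigcup_i T^i_P(\emptyset,M)$;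 a model $M$ of $P$ is an answer set iff $M=T^\infty_P(\emptyset,M)$. The complement of $A$ is $\bar A=(A_d,2^{A_d}\setminus A_c)$; $\mathcal{C}(P)$ is obtained from $P$ by replacing each $\mathit{not}\,A$ by $\bar A$; $M$ is an answer set by complement of basic $P$ iff it is an answer set of $\mathcal{C}(P)$. The reduct $P^M$ is obtained by deleting every rule having some $\mathit{not}\,A$ in its body with $M\models A$, and deleting all naf-literals from the remaining rules; $M$ is an answer set by reduct of $P$ iff it is an answer set of $P^M$. *)

theory Defs
  imports Main "HOL-Library.Countable"
begin

text \<open>Atoms are the elements of a countable type 'a (the universe is the set of atoms).
A c-atom is a pair (A_d, A_c) with A_d a set of atoms and A_c a set of subsets of A_d.\<close>

type_synonym 'a catom = "'a set \<times> 'a set set"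

definition wf_catom :: "'a catom \<Rightarrow> bool" where
  "wf_catom A \<longleftrightarrow> snd A \<subseteq> Pow (fst A)"

definition elem :: "'a \<Rightarrow> 'a catom" where
  "elem p = ({p}, {{p}})"

definition bot_catom :: "'a catom" where
  "bot_catom = (UNIV, {})"

definition monotone_catom :: "'a catom \<Rightarrow> bool" where
  "monotone_catom A \<longleftrightarrow> (\<forall>X Y. X \<subseteq> Y \<and> Y \<subseteq> fst A \<and> X \<in> snd A \<longrightarrow> Y \<in> snd A)"

datatype 'a rule = Rule (head: "'a catom") (pos: "'a catom list") (neg: "'a catom list")

type_synonym 'a program = "'a rule set"

definition sat :: "'a set \<Rightarrow> 'a catom \<Rightarrow> bool" where
  "sat S A \<longleftrightarrow> S \<inter> fst A \<in> snd A"

definition sat_body :: "'a set \<Rightarrow> 'a rule \<Rightarrow> bool" where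
  "sat_body S r \<longleftrightarrow> (\<forall>A\<in>set (pos r). sat S A) \<and> (\<forall>A\<in>set (neg r). \<not> sat S A)"

definition sat_rule :: "'a set \<Rightarrow> 'a rule \<Rightarrow> bool" where
  "sat_rule S r \<longleftrightarrow> sat S (head r) \<or> \<not> sat_body S r"

definition is_model :: "'a set \<Rightarrow> 'a program \<Rightarrow> bool" where
  "is_model M P \<longleftrightarrow> (\<forall>r\<in>P. sat_rule M r)"

definition wf_program :: "'a program \<Rightarrow> bool" where
  "wf_program P \<longleftrightarrow> (\<forall>r\<in>P. wf_catom (head r) \<and> (\<forall>A\<in>set (pos r) \<union> set (neg r). wf_catom A))"

definition positive_program :: "'a program \<Rightarrow> bool" where
  "positive_program P \<longleftrightarrow> (\<forall>r\<in>P. neg r = [])"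

definition basic_program :: "'a program \<Rightarrow> bool" where
  "basic_program P \<longleftrightarrow> (\<forall>r\<in>P. (\<exists>a. head r = elem a) \<or> head r = bot_catom)"

definition naf_monotone :: "'a program \<Rightarrow> bool" where
  "naf_monotone P \<longleftrightarrow> (\<forall>r\<in>P. \<forall>A\<in>set (neg r). monotone_catom A)"

definition csat :: "'a set \<Rightarrow> 'a set \<Rightarrow> 'a catom \<Rightarrow> bool" where
  "csat S M A \<longleftrightarrow> sat S A \<and> (\<forall>I. S \<inter> fst A \<subseteq> I \<and> I \<subseteq> M \<inter> fst A \<longrightarrow> I \<in> snd A)"

definition TP :: "'a program \<Rightarrow> 'a set \<Rightarrow> 'a set \<Rightarrow> 'a set" where
  "TP P M S = {a. \<exists>r\<in>P. head r = elem a \<and> (\<forall>B\<in>set (pos r). csat S M B)}"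

definition TP_inf :: "'a program \<Rightarrow> 'a set \<Rightarrow> 'a set" where
  "TP_inf P M = (\<Union>i. ((\<lambda>S. TP P M S) ^^ i) {})"

definition answer_set_pos :: "'a program \<Rightarrow> 'a set \<Rightarrow> bool" where
  "answer_set_pos P M \<longleftrightarrow> is_model M P \<and> M = TP_inf P M"

definition compl_catom :: "'a catom \<Rightarrow> 'a catom" where
  "compl_catom A = (fst A, Pow (fst A) - snd A)"

definition C_prog :: "'a program \<Rightarrow> 'a program" where
  "C_prog P = (\<lambda>r. Rule (head r) (pos r @ map compl_catom (neg r)) []) ` P"

definition reduct :: "'a program \<Rightarrow> 'a set \<Rightarrow> 'a program" where
  "reduct P M = {Rule (head r) (pos r) [] | r. r \<in> P \<and> (\<forall>A\<in>set (neg r). \<not> sat M A)}"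

definition answer_set_compl :: "'a program \<Rightarrow> 'a set \<Rightarrow> bool" where
  "answer_set_compl P M \<longleftrightarrow> answer_set_pos (C_prog P) M"

definition answer_set_reduct :: "'a program \<Rightarrow> 'a set \<Rightarrow> bool" where
  "answer_set_reduct P M \<longleftrightarrow> answer_set_pos (reduct P M) M"

end

theory Submission
  imports Defs
begin

(* Both semantics evaluate a positive program obtained from P rule by rule:
   the complement program C(P) turns  not A  into the positive literal  compl A, the reduct
   P^M keeps the positive part of those rules whose negative body is true in M.
   (1) Since  M |= compl A  iff  M |/= A, a set M is a model of C(P) exactly when it is a
       model of P^M.
   (2) For S <= M, the one-step operators compare as follows: T_C(P)(S,M) <= T_P^M(S,M)
       always, because  S |=_M compl A  forces  M |/= A;  and T_P^M(S,M) <= T_C(P)(S,M) when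
       every negated c-atom is monotone, because then  M |/= A  forces  S |=_M compl A.
   (3) A general transfer lemma: if M is an answer set of a positive program Q1, a model of
       a positive program Q2, and T_Q1 <= T_Q2 below M, then M is an answer set of Q2. *)

lemma csat_imp_sat: "S \<subseteq> M \<Longrightarrow> csat S M B \<Longrightarrow> sat M B"
  unfolding csat_def sat_def by (meson Int_mono order_refl)

lemma csat_mono: "S \<subseteq> S' \<Longrightarrow> S' \<subseteq> M \<Longrightarrow> csat S M B \<Longrightarrow> csat S' M B"
  unfolding csat_def sat_def by (meson Int_mono order_refl order_trans)

lemma TP_mono: "S \<subseteq> S' \<Longrightarrow> S' \<subseteq> M \<Longrightarrow> TP Q M S \<subseteq> TP Q M S'"
  unfolding TP_def using csat_mono by blast

lemma TP_within_model:
  assumes model: "is_model M Q" and positive: "positive_program Q" and "S \<subseteq> M"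
  shows "TP Q M S \<subseteq> M"
proof
  fix a assume "a \<in> TP Q M S"
  then obtain r where r: "r \<in> Q" "head r = elem a" "\<forall>B\<in>set (pos r). csat S M B"
    unfolding TP_def by blast
  have "sat_rule M r" using model r(1) unfolding is_model_def by blast
  moreover have "\<forall>B\<in>set (pos r). sat M B" using r(3) \<open>S \<subseteq> M\<close> csat_imp_sat by blast
  moreover have "neg r = []" using positive r(1) unfolding positive_program_def by blast
  ultimately have "sat M (elem a)" using r(2) unfolding sat_rule_def sat_body_def by auto
  then show "a \<in> M" unfolding sat_def elem_def by auto
qed

lemma TP_iterates_below:
  assumes model: "is_model M Q2" and positive: "positive_program Q2"
    and below: "\<And>S. S \<subseteq> M \<Longrightarrow> TP Q1 M S \<subseteq> TP Q2 M S"
  shows "(TP Q1 M ^^ i) {} \<subseteq> (TP Q2 M ^^ i) {} \<and> (TP Q2 M ^^ i) {} \<subseteq> M"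
proof (induction i)
  case 0
  then show ?case by simp
next
  case (Suc i)
  let ?A = "(TP Q1 M ^^ i) {}" and ?B = "(TP Q2 M ^^ i) {}"
  have "TP Q1 M ?A \<subseteq> TP Q2 M ?A" using below Suc.IH by blast
  also have "\<dots> \<subseteq> TP Q2 M ?B" using TP_mono Suc.IH by blast
  finally show ?case using TP_within_model[OF model positive, of ?B] Suc.IH by simp
qed

lemma answer_set_pos_transfer:
  assumes "answer_set_pos Q1 M" and model: "is_model M Q2" and positive: "positive_program Q2"
    and below: "\<And>S. S \<subseteq> M \<Longrightarrow> TP Q1 M S \<subseteq> TP Q2 M S"
  shows "answer_set_pos Q2 M"
proof -
  have "M = TP_inf Q1 M" using assms(1) unfolding answer_set_pos_def by blast
  moreover have "TP_inf Q1 M \<subseteq> TP_inf Q2 M" and "TP_inf Q2 M \<subseteq> M"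
    using TP_iterates_below[OF model positive below] unfolding TP_inf_def by blast+
  ultimately show ?thesis using model unfolding answer_set_pos_def by blast
qed

definition compl_rule :: "'a rule \<Rightarrow> 'a rule" where
  "compl_rule r = Rule (head r) (pos r @ map compl_catom (neg r)) []"

definition pos_part :: "'a rule \<Rightarrow> 'a rule" where
  "pos_part r = Rule (head r) (pos r) []"

lemma C_prog_eq: "C_prog P = compl_rule ` P"
  unfolding C_prog_def compl_rule_def ..

lemma reduct_eq: "reduct P M = pos_part ` {r \<in> P. \<forall>A\<in>set (neg r). \<not> sat M A}"
  unfolding reduct_def pos_part_def by blast

lemma positive_C_prog: "positive_program (C_prog P)"
  unfolding positive_program_def C_prog_eq compl_rule_def by auto

lemma positive_reduct: "positive_program (reduct P M)"
  unfolding positive_program_def reduct_eq pos_part_def by auto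

lemma sat_compl_catom: "sat M (compl_catom A) \<longleftrightarrow> \<not> sat M A"
  unfolding sat_def compl_catom_def by auto

lemma sat_rule_compl_rule: "sat_rule M (compl_rule r) \<longleftrightarrow> sat_rule M r"
  unfolding sat_rule_def sat_body_def compl_rule_def by (simp add: sat_compl_catom ball_Un)

lemma sat_rule_via_pos_part:
  "sat_rule M r \<longleftrightarrow> ((\<forall>A\<in>set (neg r). \<not> sat M A) \<longrightarrow> sat_rule M (pos_part r))"
  unfolding sat_rule_def sat_body_def pos_part_def by auto

lemma model_C_prog_iff_model_reduct: "is_model M (C_prog P) \<longleftrightarrow> is_model M (reduct P M)"
proof -
  have "is_model M (C_prog P) \<longleftrightarrow> (\<forall>r\<in>P. sat_rule M r)"
    unfolding is_model_def C_prog_eq by (simp add: sat_rule_compl_rule)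
  also have "\<dots> \<longleftrightarrow> (\<forall>r\<in>P. (\<forall>A\<in>set (neg r). \<not> sat M A) \<longrightarrow> sat_rule M (pos_part r))"
    using sat_rule_via_pos_part by blast
  also have "\<dots> \<longleftrightarrow> is_model M (reduct P M)"
    unfolding is_model_def reduct_eq by blast
  finally show ?thesis .
qed

lemma csat_compl_imp_not_sat: "S \<subseteq> M \<Longrightarrow> csat S M (compl_catom A) \<Longrightarrow> \<not> sat M A"
  using csat_imp_sat sat_compl_catom by metis

text \<open>Conversely, for a monotone c-atom false in M, its complement holds conditionally for
  every S inside M: no set between S and M can lie in A_c.\<close>
lemma csat_compl_of_monotone:
  assumes mono: "monotone_catom A" and false: "\<not> sat M A" and "S \<subseteq> M"
  shows "csat S M (compl_catom A)"
proof -
  have M_outside: "M \<inter> fst A \<notin> snd A" using false unfolding sat_def .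
  have outside: "I \<notin> snd A" if "I \<subseteq> M \<inter> fst A" for I
    using mono M_outside that unfolding monotone_catom_def by (meson Int_lower2)
  then have "S \<inter> fst A \<notin> snd A" using \<open>S \<subseteq> M\<close> by (meson Int_mono order_refl)
  then show ?thesis using outside unfolding csat_def sat_def compl_catom_def by auto
qed

lemma TP_C_prog_below_TP_reduct:
  assumes "S \<subseteq> M"
  shows "TP (C_prog P) M S \<subseteq> TP (reduct P M) M S"
proof
  fix a assume "a \<in> TP (C_prog P) M S"
  then obtain r where r: "r \<in> P" "head r = elem a"
    and body: "\<forall>B\<in>set (pos r @ map compl_catom (neg r)). csat S M B"
    unfolding TP_def C_prog_eq compl_rule_def by auto
  have "\<forall>A\<in>set (neg r). \<not> sat M A"
    using body csat_compl_imp_not_sat[OF assms] by auto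
  then have member: "pos_part r \<in> reduct P M" using r(1) unfolding reduct_eq by blast
  show "a \<in> TP (reduct P M) M S"
    unfolding TP_def using r(2) body
    by (intro CollectI bexI[OF _ member]) (simp add: pos_part_def)
qed

lemma TP_reduct_below_TP_C_prog:
  assumes "naf_monotone P" and "S \<subseteq> M"
  shows "TP (reduct P M) M S \<subseteq> TP (C_prog P) M S"
proof
  fix a assume "a \<in> TP (reduct P M) M S"
  then obtain r where r: "r \<in> P" "head r = elem a" and neg_false: "\<forall>A\<in>set (neg r). \<not> sat M A"
    and pos_body: "\<forall>B\<in>set (pos r). csat S M B"
    unfolding TP_def reduct_eq pos_part_def by auto
  have "\<forall>A\<in>set (neg r). csat S M (compl_catom A)"
    using assms r(1) neg_false csat_compl_of_monotone unfolding naf_monotone_def by blast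
  then have body: "\<forall>B\<in>set (pos r @ map compl_catom (neg r)). csat S M B" using pos_body by auto
  have member: "compl_rule r \<in> C_prog P" using r(1) unfolding C_prog_eq by blast
  show "a \<in> TP (C_prog P) M S"
    unfolding TP_def using r(2) body
    by (intro CollectI bexI[OF _ member]) (simp add: compl_rule_def)
qed

theorem proposition2:
  fixes P :: "('a::countable) program"
  assumes "wf_program P" and "basic_program P"
  shows "(\<forall>M. answer_set_compl P M \<longrightarrow> answer_set_reduct P M)
       \<and> (naf_monotone P \<longrightarrow> (\<forall>M. answer_set_reduct P M \<longrightarrow> answer_set_compl P M))"
proof (intro conjI allI impI)
  fix M
  assume "answer_set_compl P M"
  then have compl: "answer_set_pos (C_prog P) M" unfolding answer_set_compl_def .
  then have "is_model M (reduct P M)"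
    using model_C_prog_iff_model_reduct unfolding answer_set_pos_def by blast
  then show "answer_set_reduct P M"
    unfolding answer_set_reduct_def
    by (rule answer_set_pos_transfer[OF compl _ positive_reduct TP_C_prog_below_TP_reduct])
next
  fix M
  assume mono: "naf_monotone P" and "answer_set_reduct P M"
  then have red: "answer_set_pos (reduct P M) M" unfolding answer_set_reduct_def by simp
  then have "is_model M (C_prog P)"
    using model_C_prog_iff_model_reduct unfolding answer_set_pos_def by blast
  then show "answer_set_compl P M"
    unfolding answer_set_compl_def
    by (rule answer_set_pos_transfer[OF red _ positive_C_prog TP_reduct_below_TP_C_prog[OF mono]])
qed

end
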